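(* For every $m\ge0$, the expected number of internal vertices of a free triangulation of an $(m+2)$-gon is \[ \frac{1}{Z_m}\sum_{n\ge0} n\,\phi_{n,m}\,\alpha^{-n} = \frac{(m+1)(2m+1)}{3}. \]
   Context: $\phi_{n,m}=\frac{2^{n+1}(2m+1)!(2m+3n)!}{m!^2 n!(2m+2n+2)!}$ is the number of rooted type II triangulations (multiple edges allowed, no loops) of a disc with $m+2$ boundary vertices and $n$ internal vertices, with the convention $\phi_{0,0}=1$. Let $\alpha=27/2$ and $Z_m=\sum_n\phi_{n,m}\alpha^{-n}=\frac{(2m)!}{m!(m+2)!}(9/4)^{m+1}$. The free triangulation of an $(m+2)$-gon has law $\mu_m$, which gives each rooted triangulation of the $(m+2)$-gon with $n$ internal vertices weight $\alpha^{-n}/Z_m$. *)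

theory Defs
  imports Complex_Main
begin

text \<open>phi n m: number of rooted type II triangulations of an (m+2)-gon with n internal vertices.\<close>
definition phi :: "nat \<Rightarrow> nat \<Rightarrow> real" where
  "phi n m = (2 ^ (n + 1) * fact (2 * m + 1) * fact (2 * m + 3 * n))
             / (fact m ^ 2 * fact n * fact (2 * m + 2 * n + 2))"

definition alpha :: real where "alpha = 27 / 2"

definition Z :: "nat \<Rightarrow> real" where
  "Z m = (\<Sum>n. phi n m / alpha ^ n)"

definition expected_internal :: "nat \<Rightarrow> real" where
  "expected_internal m = (\<Sum>n. real n * phi n m / alpha ^ n) / Z m"

end

(*
  With y = 2 / alpha = 4/27 and r = 2m + 1, the weight phi n m / alpha^n equals
  2 (2m choose m) A_r(n) y^n / (2n + r + 1), where A_r(n) = r/(3n+r) (3n+r choose n)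
  is the coefficient of y^n in B(y)^r and B = 1 + y B^3.  So everything reduces to the
  values S_r = sum_n A_r(n) y^n = B(4/27)^r, which we show to be (3/2)^r without any
  analytic continuation: y B^(r+3) = B^(r+1) - B^r gives the recurrence
  4 S_(r+3) = 27 (S_(r+1) - S_r) with characteristic roots 3/2, 3/2, -3; positivity
  kills the (-3)^r mode, and S_2 = S_1^2 (the convolution A_1 * A_1 = A_2, proved with a
  Zeilberger certificate) forces S_1 = 3/2.  Finally the contiguous relation
  A_r(n+1)/(2n+r+3) = A_(r+1)(n+1)/(r+1) - 3 A_(r+3)(n)/(r+3) expresses the weighted
  series for Z_m and for the first moment through the S_r, and the mean is r(r+1)/6.
*)
theory Submission
  imports Defs "HOL-Real_Asymp.Real_Asymp"
begin

text \<open>The number \<open>A\<^sub>r(n) = r / (3n + r) * (3n + r choose n)\<close>; the case \<open>r = 0\<close> is set apart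
  because of \<open>0 / 0\<close> at \<open>n = 0\<close>.\<close>
definition fuss_catalan :: "nat \<Rightarrow> nat \<Rightarrow> real" where
  "fuss_catalan r n = (if r = 0 then (if n = 0 then 1 else 0)
     else real r * fact (3 * n + r - 1) / (fact n * fact (2 * n + r)))"

lemma fact_plus1: "(fact (n + 1) :: real) = (real n + 1) * fact n"
  by (simp add: algebra_simps)

lemma fact_plus2: "(fact (n + 2) :: real) = (real n + 1) * (real n + 2) * fact n"
  by (simp add: numeral_2_eq_2 algebra_simps)

lemma fact_plus3: "(fact (n + 3) :: real) = (real n + 1) * (real n + 2) * (real n + 3) * fact n"
  by (simp add: numeral_3_eq_3 algebra_simps)

lemma fuss_catalan_nonneg: "fuss_catalan r n \<ge> 0"
  by (simp add: fuss_catalan_def)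

lemma fuss_catalan_0_right [simp]: "fuss_catalan r 0 = 1"
  by (cases r) (simp_all add: fuss_catalan_def fact_reduce)

lemma fuss_catalan_1: "fuss_catalan 1 n = fact (3 * n) / (fact n * fact (2 * n + 1))"
  by (simp add: fuss_catalan_def)

definition fc1_ratio :: "nat \<Rightarrow> real" where
  "fc1_ratio n = (3 * (3 * real n + 1) * (3 * real n + 2)) / (2 * (real n + 1) * (2 * real n + 3))"

lemma fuss_catalan_1_Suc: "fuss_catalan 1 (Suc n) = fuss_catalan 1 n * fc1_ratio n"
proof -
  have "3 * Suc n = 3 * n + 3" "2 * Suc n + 1 = (2 * n + 1) + 2" by simp_all
  then have "fuss_catalan 1 (Suc n) =
      (real (3*n) + 1) * (real (3*n) + 2) * (real (3*n) + 3) * fact (3*n) /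
      ((real n + 1) * fact n * ((real (2*n+1) + 1) * (real (2*n+1) + 2) * fact (2*n+1)))"
    by (simp only: fuss_catalan_1 Suc_eq_plus1 fact_plus1 fact_plus2 fact_plus3)
  also have "\<dots> = fuss_catalan 1 n * fc1_ratio n"
    unfolding fuss_catalan_1 fc1_ratio_def by (simp add: divide_simps) (simp add: algebra_simps)
  finally show ?thesis .
qed

lemma fuss_catalan_add3: "fuss_catalan (r + 3) n = fuss_catalan (r + 1) (Suc n) - fuss_catalan r (Suc n)"
proof -
  define a where "a = 3 * n + r + 2"
  define b where "b = 2 * n + r + 2"
  have e: "3 * n + (r + 3) - 1 = a" "2 * n + (r + 3) = b + 1"
     "3 * Suc n + (r + 1) - 1 = a + 1" "2 * Suc n + (r + 1) = b + 1"
     "3 * Suc n + r - 1 = a" "2 * Suc n + r = b"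
    by (simp_all add: a_def b_def)
  have h1: "fuss_catalan (r + 3) n = real (r + 3) * fact a / (fact n * ((real b + 1) * fact b))"
    unfolding fuss_catalan_def e by (simp add: fact_plus1 algebra_simps)
  have h2: "fuss_catalan (r + 1) (Suc n) =
      real (r + 1) * ((real a + 1) * fact a) / ((real n + 1) * fact n * ((real b + 1) * fact b))"
    unfolding fuss_catalan_def e by (simp add: fact_plus1 algebra_simps)
  have h3: "fuss_catalan r (Suc n) = real r * fact a / ((real n + 1) * fact n * fact b)"
    unfolding fuss_catalan_def e by (simp add: fact_plus1)
  have h4: "real a = 3 * real n + real r + 2" "real b = 2 * real n + real r + 2"
    by (simp_all add: a_def b_def)
  show ?thesis unfolding h1 h2 h3 h4
    by (simp add: divide_simps) (simp add: algebra_simps)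
qed

lemma fuss_catalan_add3_le: "fuss_catalan (r + 3) n \<le> fuss_catalan (r + 1) (Suc n)"
  using fuss_catalan_add3[of r n] fuss_catalan_nonneg[of r "Suc n"] by simp

lemma fuss_catalan_2_le: "fuss_catalan 2 n \<le> fuss_catalan 1 (Suc n)"
proof -
  have e: "3*n + 2 - 1 = 3*n+1" "2*n+2 = (2*n+1)+1" "3 * Suc n = (3*n+1) + 2"
    "2 * Suc n + 1 = (2*n+1) + 2" by simp_all
  show ?thesis unfolding fuss_catalan_def e
    by (simp add: fact_plus1 fact_plus2 divide_simps) (simp add: algebra_simps)
qed

definition y_crit :: real where "y_crit = 4 / 27"

text \<open>\<open>central_ratio n = (2n choose n) / 4\<^sup>n\<close>\<close>
fun central_ratio :: "nat \<Rightarrow> real" where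
  "central_ratio 0 = 1"
| "central_ratio (Suc n) = central_ratio n * (2 * real n + 1) / (2 * real n + 2)"

lemma central_ratio_pos: "central_ratio n > 0"
  by (induction n) auto

lemma decseq_central_ratio: "decseq central_ratio"
proof (rule decseq_SucI)
  fix n
  have "central_ratio n * ((2 * real n + 1) / (2 * real n + 2)) \<le> central_ratio n * 1"
    using central_ratio_pos[of n] by (intro mult_left_mono) auto
  then show "central_ratio (Suc n) \<le> central_ratio n" by simp
qed

lemma fuss_catalan_1_bound: "fuss_catalan 1 n * y_crit ^ n \<le> central_ratio n / (real n + 1)"
proof (induction n)
  case (Suc n)
  define q where "q = fc1_ratio n * y_crit"
  have q: "0 \<le> q" "q \<le> (2*real n+1)/(2*real n+4)"
    unfolding q_def fc1_ratio_def y_crit_def by (simp_all add: divide_simps) (simp add: algebra_simps)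
  have "fuss_catalan 1 (Suc n) * y_crit ^ Suc n = (fuss_catalan 1 n * y_crit ^ n) * q"
    unfolding fuss_catalan_1_Suc q_def by (simp add: algebra_simps)
  also have "\<dots> \<le> central_ratio n / (real n + 1) * ((2*real n+1)/(2*real n+4))"
    using Suc.IH q fuss_catalan_nonneg[of 1 n] central_ratio_pos[of n]
    by (intro mult_mono) (auto simp: y_crit_def)
  also have "\<dots> = central_ratio (Suc n) / (real (Suc n) + 1)"
    by (simp add: divide_simps) (simp add: algebra_simps)
  finally show ?case .
qed simp

lemma summable_fuss_catalan_1: "summable (\<lambda>n. fuss_catalan 1 n * y_crit ^ n)"
proof -
  have "\<forall>n. 0 \<le> central_ratio n" using central_ratio_pos less_imp_le by blast
  then obtain L where "central_ratio \<longlonglongrightarrow> L"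
    using decseq_convergent[OF decseq_central_ratio] by blast
  then have "summable (\<lambda>n. 2 * (central_ratio n - central_ratio (Suc n)))"
    by (intro summable_mult telescope_summable')
  then show ?thesis
  proof (rule summable_comparison_test[rotated], intro exI allI impI)
    fix n :: nat
    have "central_ratio n / (real n + 1) = 2 * (central_ratio n - central_ratio (Suc n))"
      by (simp add: divide_simps) (simp add: algebra_simps)
    then show "norm (fuss_catalan 1 n * y_crit ^ n) \<le> 2 * (central_ratio n - central_ratio (Suc n))"
      using fuss_catalan_1_bound[of n] fuss_catalan_nonneg[of 1 n] by (simp add: y_crit_def)
  qed
qed

lemma summable_by_shifted_bound:
  fixes a b :: "nat \<Rightarrow> real"
  assumes "summable (\<lambda>n. a n * y ^ n)" "y > 0" "\<And>n. 0 \<le> b n" "\<And>n. b n \<le> a (Suc n)"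
  shows "summable (\<lambda>n. b n * y ^ n)"
proof (rule summable_comparison_test)
  show "summable (\<lambda>n. a (Suc n) * y ^ Suc n / y)"
    using assms(1) summable_Suc_iff[of "\<lambda>n. a n * y ^ n"] by (intro summable_divide) simp
  have "b n * y ^ n \<le> a (Suc n) * y ^ n" for n
    using assms by (intro mult_right_mono) auto
  then show "\<exists>N. \<forall>n\<ge>N. norm (b n * y ^ n) \<le> a (Suc n) * y ^ Suc n / y"
    using assms(2,3) by auto
qed

lemma summable_fuss_catalan: "summable (\<lambda>n. fuss_catalan r n * y_crit ^ n)"
proof -
  have pos: "y_crit > 0" by (simp add: y_crit_def)
  have "summable (\<lambda>n. fuss_catalan (r + 1) n * y_crit ^ n) \<and>
        summable (\<lambda>n. fuss_catalan (r + 2) n * y_crit ^ n)" for r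
  proof (induction r)
    case 0
    show ?case unfolding add_0 using summable_fuss_catalan_1
      summable_by_shifted_bound[OF summable_fuss_catalan_1 pos fuss_catalan_nonneg fuss_catalan_2_le]
      by (intro conjI)
  next
    case (Suc r)
    have "summable (\<lambda>n. fuss_catalan (r + 3) n * y_crit ^ n)"
      using summable_by_shifted_bound[OF conjunct1[OF Suc.IH] pos fuss_catalan_nonneg
          fuss_catalan_add3_le] .
    moreover have "Suc r + 1 = r + 2" "Suc r + 2 = r + 3" by simp_all
    ultimately show ?case using Suc.IH by metis
  qed
  moreover have "summable (\<lambda>n. fuss_catalan 0 n * y_crit ^ n)"
    by (rule summable_finite[of "{0}"]) (simp_all add: fuss_catalan_def)
  ultimately show ?thesis by (cases r) auto
qed

lemma recurrence_closed_form:
  fixes s :: "nat \<Rightarrow> real"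
  assumes rec: "\<And>r. 4 * s (r + 3) = 27 * (s (r + 1) - s r)"
  obtains a b where
    "\<And>r. s r = (a + b * real r) * (3/2) ^ r + (4 * s 2 - 12 * s 1 + 9 * s 0) / 81 * (-3) ^ r"
proof -
  define c where "c = (4 * s 2 - 12 * s 1 + 9 * s 0) / 81"
  define a where "a = s 0 - c"
  define b where "b = 2 * s 1 / 3 + 2 * c - a"
  define f where "f r = (a + b * real r) * (3/2) ^ r + c * (-3) ^ r" for r
  have "s r = f r" for r
  proof (induction r rule: less_induct)
    case (less r)
    show ?case
    proof (cases "r < 3")
      case True
      then have "r = 0 \<or> r = 1 \<or> r = 2" by linarith
      then show ?thesis
        by (elim disjE) (simp_all add: f_def a_def b_def c_def power2_eq_square field_simps)
    next
      case False
      then obtain q where r: "r = q + 3" by (intro that[of "r - 3"]) simp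
      then have "s q = f q" "s (q + 1) = f (q + 1)" using less by simp_all
      moreover have "4 * f (q + 3) = 27 * (f (q + 1) - f q)"
        unfolding f_def by (simp add: power_add power3_eq_cube field_simps)
      ultimately show ?thesis using rec[of q] r by simp
    qed
  qed
  then show ?thesis using that unfolding f_def c_def by blast
qed

lemma nonneg_recurrence_initial_relation:
  fixes s :: "nat \<Rightarrow> real"
  assumes rec: "\<And>r. 4 * s (r + 3) = 27 * (s (r + 1) - s r)" and nonneg: "\<And>r. 0 \<le> s r"
  shows "4 * s 2 = 12 * s 1 - 9 * s 0"
proof -
  define c where "c = (4 * s 2 - 12 * s 1 + 9 * s 0) / 81"
  obtain a b where closed: "\<And>r. s r = (a + b * real r) * (3/2) ^ r + c * (-3) ^ r"
    using recurrence_closed_form[OF rec] unfolding c_def by blast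
  \<comment> \<open>Divided by \<open>3\<^sup>r\<close>, the solution tends to \<open>c (-1)\<^sup>r\<close>; nonnegativity along even and odd \<open>r\<close> forces \<open>c = 0\<close>.\<close>
  have scaled: "0 \<le> (a + b * real r) * (1/2) ^ r + c * (-1) ^ r" for r
  proof -
    have "0 \<le> s r / 3 ^ r" using nonneg[of r] by simp
    also have "s r / 3 ^ r = (a + b * real r) * (1/2) ^ r + c * (-1) ^ r"
      unfolding closed by (simp add: field_simps power_mult_distrib[symmetric])
    finally show ?thesis .
  qed
  have "(\<lambda>k. (a + b * real (2 * k)) * (1/2) ^ (2 * k) + c) \<longlonglongrightarrow> 0 + c"
    by (intro tendsto_add tendsto_const) real_asymp
  then have "0 \<le> 0 + c"
  proof (rule LIMSEQ_le_const, intro exI allI impI)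
    fix k :: nat
    show "0 \<le> (a + b * real (2 * k)) * (1/2) ^ (2 * k) + c"
      using scaled[of "2 * k"] by (simp add: power_mult)
  qed
  moreover have "(\<lambda>k. (a + b * real (2 * k + 1)) * (1/2) ^ (2 * k + 1) - c) \<longlonglongrightarrow> 0 - c"
    by (intro tendsto_diff tendsto_const) real_asymp
  then have "0 \<le> 0 - c"
  proof (rule LIMSEQ_le_const, intro exI allI impI)
    fix k :: nat
    show "0 \<le> (a + b * real (2 * k + 1)) * (1/2) ^ (2 * k + 1) - c"
      using scaled[of "2 * k + 1"] by (simp add: power_mult)
  qed
  ultimately show ?thesis unfolding c_def by simp
qed

definition fc_series :: "nat \<Rightarrow> real" where
  "fc_series r = (\<Sum>n. fuss_catalan r n * y_crit ^ n)"

lemma fc_series_split: "fc_series r = 1 + (\<Sum>n. fuss_catalan r (Suc n) * y_crit ^ Suc n)"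
  using suminf_split_head[OF summable_fuss_catalan[of r]] unfolding fc_series_def by simp

lemma summable_fuss_catalan_Suc: "summable (\<lambda>n. fuss_catalan r (Suc n) * y_crit ^ Suc n)"
  by (rule summable_Suc_iff[of "\<lambda>n. fuss_catalan r n * y_crit ^ n", THEN iffD2, OF summable_fuss_catalan])

lemma fc_series_ge_1: "fc_series r \<ge> 1"
  using fc_series_split[of r] suminf_nonneg[OF summable_fuss_catalan_Suc[of r]]
    fuss_catalan_nonneg by (simp add: y_crit_def)

lemma fc_series_0: "fc_series 0 = 1"
  using fc_series_split[of 0] by (simp add: fuss_catalan_def)

lemma fc_series_add3: "4 * fc_series (r + 3) = 27 * (fc_series (r + 1) - fc_series r)"
proof -
  have "fc_series (r + 1) - fc_series r =
      (\<Sum>n. fuss_catalan (r + 1) (Suc n) * y_crit ^ Suc n - fuss_catalan r (Suc n) * y_crit ^ Suc n)"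
    using fc_series_split[of r] fc_series_split[of "r + 1"]
      suminf_diff[OF summable_fuss_catalan_Suc summable_fuss_catalan_Suc] by simp
  also have "\<dots> = (\<Sum>n. y_crit * (fuss_catalan (r + 3) n * y_crit ^ n))"
    by (simp add: fuss_catalan_add3 algebra_simps)
  also have "\<dots> = y_crit * fc_series (r + 3)"
    unfolding fc_series_def by (rule suminf_mult[OF summable_fuss_catalan])
  finally show ?thesis by (simp add: y_crit_def)
qed

lemma fc_series_2_linear: "4 * fc_series 2 = 12 * fc_series 1 - 9"
proof -
  have "0 \<le> fc_series r" for r
    using fc_series_ge_1[of r] by linarith
  then show ?thesis
    using nonneg_recurrence_initial_relation[OF fc_series_add3] fc_series_0 by simp
qed

text \<open>A Zeilberger certificate: the two terms of the recurrence in
  \<open>fuss_catalan_1_convolution_Suc\<close> are, summand by summand, the differences of \<open>conv_cert n\<close>.\<close>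
definition conv_cert_rat :: "nat \<Rightarrow> nat \<Rightarrow> real" where
  "conv_cert_rat n k =
     real k * (8 * real k ^ 2 - 12 * real k * (real n + 1) - 6 * real n - 8) / (real n + 1)"

definition conv_cert :: "nat \<Rightarrow> nat \<Rightarrow> real" where
  "conv_cert n k = conv_cert_rat n k * fuss_catalan 1 k * fuss_catalan 1 (n + 1 - k)"

lemma conv_cert_rat_identity:
  assumes "n = k + j"
  shows "- 3 * (3 * real n + 2) * (3 * real n + 4) + 2 * (2 * real n + 3) * (real n + 2) * fc1_ratio j
     = conv_cert_rat n (Suc k) * fc1_ratio k - conv_cert_rat n k * fc1_ratio j"
proof -
  have "real n = real k + real j" using assms by simp
  moreover have "real j + 1 \<noteq> 0" "2 * real j + 3 \<noteq> 0" "real k + 1 \<noteq> 0" "2 * real k + 3 \<noteq> 0"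
     "real k + real j + 1 \<noteq> 0" by (simp_all add: add_nonneg_pos)
  ultimately show ?thesis unfolding conv_cert_rat_def fc1_ratio_def
    by (simp add: divide_simps) (simp add: algebra_simps power2_eq_square)
qed

lemma conv_cert_diff:
  assumes "k \<le> n"
  shows "- 3 * (3 * real n + 2) * (3 * real n + 4) * (fuss_catalan 1 k * fuss_catalan 1 (n - k))
         + 2 * (2 * real n + 3) * (real n + 2) * (fuss_catalan 1 k * fuss_catalan 1 (Suc n - k))
       = conv_cert n (Suc k) - conv_cert n k"
proof -
  obtain j where j: "n = k + j" using assms le_Suc_ex by blast
  then have e: "n - k = j" "n + 1 - k = Suc j" "n + 1 - Suc k = j" "Suc n - k = Suc j" by simp_all
  have "conv_cert n (Suc k) - conv_cert n k = fuss_catalan 1 k * fuss_catalan 1 j *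
      (conv_cert_rat n (Suc k) * fc1_ratio k - conv_cert_rat n k * fc1_ratio j)"
    unfolding conv_cert_def e fuss_catalan_1_Suc by (simp add: algebra_simps)
  then show ?thesis
    unfolding conv_cert_rat_identity[OF j, symmetric] e fuss_catalan_1_Suc by (simp add: algebra_simps)
qed

lemma fuss_catalan_1_convolution_Suc:
  fixes n :: nat
  defines "P \<equiv> \<lambda>n. \<Sum>k\<le>n. fuss_catalan 1 k * fuss_catalan 1 (n - k)"
  shows "2 * (2 * real n + 3) * (real n + 2) * P (Suc n) = 3 * (3 * real n + 2) * (3 * real n + 4) * P n"
proof -
  define c0 where "c0 = - 3 * (3 * real n + 2) * (3 * real n + 4)"
  define c1 where "c1 = 2 * (2 * real n + 3) * (real n + 2)"
  have "(\<Sum>k\<le>n. c0 * (fuss_catalan 1 k * fuss_catalan 1 (n - k))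
          + c1 * (fuss_catalan 1 k * fuss_catalan 1 (Suc n - k)))
        = (\<Sum>k\<le>n. conv_cert n (Suc k) - conv_cert n k)"
    unfolding c0_def c1_def by (intro sum.cong refl conv_cert_diff) simp
  also have "\<dots> = conv_cert n (Suc n) - conv_cert n 0"
    using sum_lessThan_telescope[of "conv_cert n" "Suc n"] by (simp add: lessThan_Suc_atMost)
  also have "\<dots> = - c1 * fuss_catalan 1 (Suc n)"
    by (simp add: conv_cert_def conv_cert_rat_def c1_def divide_simps)
      (simp add: algebra_simps power2_eq_square)
  finally have "c0 * P n + c1 * (\<Sum>k\<le>n. fuss_catalan 1 k * fuss_catalan 1 (Suc n - k))
      = - c1 * fuss_catalan 1 (Suc n)"
    by (simp add: P_def sum.distrib sum_distrib_left)
  moreover have "P (Suc n) = (\<Sum>k\<le>n. fuss_catalan 1 k * fuss_catalan 1 (Suc n - k)) + fuss_catalan 1 (Suc n)"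
    unfolding P_def by simp
  ultimately show ?thesis unfolding c0_def c1_def by (simp add: algebra_simps)
qed

lemma fuss_catalan_2_Suc:
  "2 * (2 * real n + 3) * (real n + 2) * fuss_catalan 2 (Suc n) =
     3 * (3 * real n + 2) * (3 * real n + 4) * fuss_catalan 2 n"
proof -
  have e: "3*n + 2 - 1 = 3*n+1" "3 * Suc n + 2 - 1 = (3*n+1) + 3" "2 * Suc n + 2 = (2*n+2) + 2"
    by simp_all
  have h1: "fuss_catalan 2 n = 2 * fact (3*n+1) / (fact n * fact (2*n+2))"
    unfolding fuss_catalan_def e by simp
  have h2: "fuss_catalan 2 (Suc n) = 2 * ((real (3*n+1) + 1) * (real (3*n+1) + 2) * (real (3*n+1) + 3) * fact (3*n+1)) /
      (((real n + 1) * fact n) * ((real (2*n+2) + 1) * (real (2*n+2) + 2) * fact (2*n+2)))"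
    unfolding fuss_catalan_def e by (simp only: fact_plus3 fact_plus2 fact_Suc) (simp add: algebra_simps)
  show ?thesis unfolding h1 h2
    by (simp add: divide_simps) (simp add: algebra_simps)
qed

lemma fuss_catalan_1_convolution:
  "(\<Sum>k\<le>n. fuss_catalan 1 k * fuss_catalan 1 (n - k)) = fuss_catalan 2 n"
proof (induction n)
  case (Suc n)
  have "2 * (2 * real n + 3) * (real n + 2) * (\<Sum>k\<le>Suc n. fuss_catalan 1 k * fuss_catalan 1 (Suc n - k))
      = 2 * (2 * real n + 3) * (real n + 2) * fuss_catalan 2 (Suc n)"
    using fuss_catalan_1_convolution_Suc[of n] fuss_catalan_2_Suc[of n] Suc.IH by simp
  then show ?case by (simp add: add_nonneg_pos)
qed simp

lemma fc_series_2_square: "fc_series 2 = fc_series 1 ^ 2"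
proof -
  have abs_summable: "summable (\<lambda>k. norm (fuss_catalan 1 k * y_crit ^ k))"
    using summable_fuss_catalan[of 1] by (simp add: fuss_catalan_nonneg y_crit_def)
  have "fc_series 1 * fc_series 1 =
      (\<Sum>n. \<Sum>k\<le>n. (fuss_catalan 1 k * y_crit ^ k) * (fuss_catalan 1 (n - k) * y_crit ^ (n - k)))"
    unfolding fc_series_def by (rule Cauchy_product[OF abs_summable abs_summable])
  also have "\<dots> = (\<Sum>n. (\<Sum>k\<le>n. fuss_catalan 1 k * fuss_catalan 1 (n - k)) * y_crit ^ n)"
  proof (intro arg_cong[where f = suminf] ext, unfold sum_distrib_right, intro sum.cong refl)
    fix n k :: nat
    assume "k \<in> {..n}"
    then have "y_crit ^ n = y_crit ^ k * y_crit ^ (n - k)" by (simp flip: power_add)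
    then show "fuss_catalan 1 k * y_crit ^ k * (fuss_catalan 1 (n - k) * y_crit ^ (n - k)) =
        fuss_catalan 1 k * fuss_catalan 1 (n - k) * y_crit ^ n" by simp
  qed
  finally show ?thesis
    unfolding fc_series_def fuss_catalan_1_convolution by (simp add: power2_eq_square)
qed

lemma fc_series_1: "fc_series 1 = 3 / 2"
proof -
  have "(fc_series 1 - 3 / 2) ^ 2 = 0"
    using fc_series_2_square fc_series_2_linear by (simp add: power2_eq_square algebra_simps)
  then show ?thesis by simp
qed

lemma fc_series_eq_power: "fc_series r = (3 / 2) ^ r"
proof -
  have c: "4 * fc_series 2 - 12 * fc_series 1 + 9 * fc_series 0 = 0"
    unfolding fc_series_2_square fc_series_1 fc_series_0 by (simp add: power2_eq_square)
  obtain a b where closed: "\<And>r. fc_series r = (a + b * real r) * (3/2) ^ r"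
    using recurrence_closed_form[OF fc_series_add3] unfolding c by auto
  have "a = 1" "b = 0"
    using closed[of 0] closed[of 1] fc_series_0 fc_series_1 by simp_all
  then show ?thesis using closed by simp
qed

lemma fuss_catalan_sums: "(\<lambda>n. fuss_catalan r n * y_crit ^ n) sums (3 / 2) ^ r"
  using summable_sums[OF summable_fuss_catalan[of r]] fc_series_eq_power[of r]
  unfolding fc_series_def by simp

lemma fuss_catalan_Suc_div:
  "fuss_catalan r (Suc n) / (2 * real n + real r + 3) =
     fuss_catalan (r + 1) (Suc n) / (real r + 1) - 3 * fuss_catalan (r + 3) n / (real r + 3)"
proof -
  define a where "a = 3 * n + r + 2"
  define b where "b = 2 * n + r + 2"
  have e: "3 * Suc n + r - 1 = a" "2 * Suc n + r = b"
     "3 * Suc n + (r + 1) - 1 = a + 1" "2 * Suc n + (r + 1) = b + 1"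
     "3 * n + (r + 3) - 1 = a" "2 * n + (r + 3) = b + 1"
    by (simp_all add: a_def b_def)
  have h1: "fuss_catalan r (Suc n) = real r * fact a / ((real n + 1) * fact n * fact b)"
    unfolding fuss_catalan_def e by (simp add: algebra_simps)
  have h2: "fuss_catalan (r + 1) (Suc n) =
      real (r + 1) * ((real a + 1) * fact a) / ((real n + 1) * fact n * ((real b + 1) * fact b))"
    unfolding fuss_catalan_def e by (simp add: algebra_simps)
  have h3: "fuss_catalan (r + 3) n = real (r + 3) * fact a / (fact n * ((real b + 1) * fact b))"
    unfolding fuss_catalan_def e by (simp only: fact_plus1) simp
  have h4: "real a = 3 * real n + real r + 2" "real b = 2 * real n + real r + 2"
    by (simp_all add: a_def b_def)
  show ?thesis unfolding h1 h2 h3 h4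
    by (simp add: divide_simps) (simp add: algebra_simps)
qed

lemma fuss_catalan_weighted_sums:
  "(\<lambda>n. fuss_catalan r n * y_crit ^ n / (2 * real n + real r + 1))
     sums (2 * (3 / 2) ^ (r + 1) / ((real r + 1) * (real r + 3)))"
proof -
  define S where "S = (3 / 2 :: real) ^ (r + 1)"
  have "(\<lambda>n. fuss_catalan (r + 1) (Suc n) * y_crit ^ Suc n) sums (S - 1)"
    using fuss_catalan_sums[of "r + 1", folded S_def] sums_Suc_iff by fastforce
  moreover have "(\<lambda>n. fuss_catalan (r + 3) n * y_crit ^ n) sums (9 / 4 * S)"
  proof -
    have "(3 / 2 :: real) ^ (r + 3) = 9 / 4 * S" unfolding S_def by (simp add: power_add power3_eq_cube)
    then show ?thesis using fuss_catalan_sums[of "r + 3"] by (simp only:)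
  qed
  ultimately have "(\<lambda>n. fuss_catalan (r + 1) (Suc n) * y_crit ^ Suc n / (real r + 1)
      - 3 * y_crit / (real r + 3) * (fuss_catalan (r + 3) n * y_crit ^ n))
      sums ((S - 1) / (real r + 1) - 3 * y_crit / (real r + 3) * (9 / 4 * S))"
    by (intro sums_diff sums_divide sums_mult)
  moreover have "fuss_catalan (r + 1) (Suc n) * y_crit ^ Suc n / (real r + 1)
      - 3 * y_crit / (real r + 3) * (fuss_catalan (r + 3) n * y_crit ^ n)
      = fuss_catalan r (Suc n) * y_crit ^ Suc n / (2 * real (Suc n) + real r + 1)" for n
  proof -
    have "fuss_catalan r (Suc n) * y_crit ^ Suc n / (2 * real (Suc n) + real r + 1)
        = y_crit ^ Suc n * (fuss_catalan r (Suc n) / (2 * real n + real r + 3))"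
      by (simp add: algebra_simps)
    then show ?thesis unfolding fuss_catalan_Suc_div by (simp add: algebra_simps)
  qed
  ultimately have "(\<lambda>n. fuss_catalan r (Suc n) * y_crit ^ Suc n / (2 * real (Suc n) + real r + 1))
      sums ((S - 1) / (real r + 1) - 3 * y_crit / (real r + 3) * (9 / 4 * S))"
    by simp
  then have "(\<lambda>n. fuss_catalan r n * y_crit ^ n / (2 * real n + real r + 1))
      sums ((S - 1) / (real r + 1) - 3 * y_crit / (real r + 3) * (9 / 4 * S) + 1 / (real r + 1))"
    using sums_Suc_iff[of "\<lambda>n. fuss_catalan r n * y_crit ^ n / (2 * real n + real r + 1)"] by simp
  moreover have "(S - 1) / (real r + 1) - 3 * y_crit / (real r + 3) * (9 / 4 * S) + 1 / (real r + 1)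
      = 2 * S / ((real r + 1) * (real r + 3))"
    by (simp add: y_crit_def add_pos_pos divide_simps) (simp add: algebra_simps)
  ultimately show ?thesis by (simp add: S_def)
qed

lemma phi_div_alpha_power:
  "phi n m / alpha ^ n = 2 * real (2 * m choose m) *
     (fuss_catalan (2 * m + 1) n * y_crit ^ n / (2 * real n + real (2 * m + 1) + 1))"
proof -
  have pw: "(2::real) ^ (n + 1) / alpha ^ n = 2 * y_crit ^ n"
    unfolding alpha_def y_crit_def by (simp add: power_divide field_simps power_mult_distrib[symmetric])
  have binom: "real (2 * m choose m) = fact (2 * m) / (fact m)^2"
    by (simp add: binomial_fact power2_eq_square)
  have f1: "(fact (2 * m + 1) :: real) = (2 * real m + 1) * fact (2 * m)"
    using fact_plus1[of "2 * m"] by simp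
  have f2: "(fact (2 * m + 2 * n + 2) :: real) = (2 * real n + 2 * real m + 2) * fact (2 * n + 2 * m + 1)"
    using fact_plus1[of "2 * n + 2 * m + 1"] by (simp add: algebra_simps)
  have fc: "fuss_catalan (2 * m + 1) n = (2 * real m + 1) * fact (2 * m + 3 * n) / (fact n * fact (2 * n + 2 * m + 1))"
    by (simp add: fuss_catalan_def algebra_simps)
  have "phi n m / alpha ^ n = ((2::real) ^ (n + 1) / alpha ^ n) *
      (fact (2 * m + 1) * fact (2 * m + 3 * n) / ((fact m)^2 * fact n * fact (2 * m + 2 * n + 2)))"
    unfolding phi_def by (simp add: mult_ac)
  also have "\<dots> = 2 * real (2 * m choose m) *
      (fuss_catalan (2 * m + 1) n * y_crit ^ n / (2 * real n + real (2 * m + 1) + 1))"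
    unfolding pw binom f1 f2 fc by (simp add: divide_simps)
  finally show ?thesis .
qed

theorem proposition5p1:
  fixes m :: nat
  shows "summable (\<lambda>n. real n * phi n m / alpha ^ n) \<and>
         expected_internal m = real ((m + 1) * (2 * m + 1)) / 3"
proof -
  define r where "r = 2 * m + 1"
  define C where "C = real (2 * m choose m)"
  define w where "w n = fuss_catalan r n * y_crit ^ n / (2 * real n + real r + 1)" for n
  define W where "W = 2 * (3 / 2) ^ (r + 1) / ((real r + 1) * (real r + 3))"
  have w: "w sums W"
    unfolding w_def W_def by (rule fuss_catalan_weighted_sums)
  have phi: "phi n m / alpha ^ n = 2 * C * w n" for n
    unfolding phi_div_alpha_power C_def w_def r_def ..
  have Z: "Z m = 2 * C * W"
    unfolding Z_def phi using sums_unique[OF sums_mult[OF w, of "2 * C"]] by simp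
  have "real n * phi n m / alpha ^ n = C * (fuss_catalan r n * y_crit ^ n) - (real r + 1) * C * w n" for n
    unfolding times_divide_eq_right[symmetric] phi w_def by (simp add: field_simps)
  then have moment: "(\<lambda>n. real n * phi n m / alpha ^ n) sums (C * (3 / 2) ^ r - (real r + 1) * C * W)"
    using sums_diff[OF sums_mult[OF fuss_catalan_sums[of r], of C] sums_mult[OF w, of "(real r + 1) * C"]]
    by presburger
  define p where "p = (3 / 2 :: real) ^ r"
  have W_p: "W = 3 * p / ((real r + 1) * (real r + 3))"
    unfolding W_def p_def by simp
  have "C > 0" "p > 0" by (simp_all add: C_def p_def)
  then have "expected_internal m = real r * (real r + 1) / 6"
    unfolding expected_internal_def Z sums_unique[OF moment, symmetric] p_def[symmetric] W_p
    by (simp add: divide_simps) (simp add: algebra_simps)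
  then show ?thesis
    using sums_summable[OF moment] by (simp add: r_def field_simps)
qed

end
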